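(* For every Weyl element $w\in\mathbf{W}$ there is $z_w\in\mathcal{Z}$ such that $d_{w_0w}=w_0d_ww_0d_{w_0}z_w$.
   Context: $F$ is a non-archimedean local field with uniformizer $\varpi$. $G=GL_n(F)$ with center $\mathcal{Z}$ (scalar matrices). $\mathbf{W}$ is the Weyl group of permutation matrices and $w_0$ its longest element. Roots $\alpha_{i,j}(\mathrm{diag}(t))=t_i/t_j$, $\Phi^+=\{\alpha_{i,j}:i<j\}$, $\Phi^-=\{\alpha_{i,j}:i>j\}$, $\Delta=\{\alpha_{i,i+1}\}$, $(w\alpha)(t)=\alpha(w^{-1}tw)$, $\langle\alpha_{i,j},\bar{k}\rangle=k_i-k_j$. For $\bar{k}\in\mathbb{Z}^n$, $\varpi^{\bar{k}}=\mathrm{diag}(\varpi^{k_1},\dots,\varpi^{k_n})$. For $w\in\mathbf{W}$, $d_w$ is the element $\varpi^{\bar{k}}$ with $k_n=0$ and, for all $\alpha\in\Delta$, $\langle\alpha,\bar{k}\rangle=0$ if $w^{-1}\alpha\in\Phi^+$ and $\langle\alpha,\bar{k}\rangle=-1$ if $w^{-1}\alpha\in\Phi^-$. *)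

theory Defs
  imports "Jordan_Normal_Form.Determinant"
begin

text \<open>Non-archimedean local field, given via a normalized discrete valuation
  v (meaningful on nonzero elements) with uniformizer varpi: v is a valuation,
  the field is complete for it and the residue field is finite.\<close>
definition nonarch_local_field_unif :: "('a::field \<Rightarrow> int) \<Rightarrow> 'a \<Rightarrow> bool" where
  "nonarch_local_field_unif v \<pi> \<longleftrightarrow>
     (\<forall>x y. x \<noteq> 0 \<longrightarrow> y \<noteq> 0 \<longrightarrow> v (x * y) = v x + v y) \<and>
     (\<forall>x y. x \<noteq> 0 \<longrightarrow> y \<noteq> 0 \<longrightarrow> x + y \<noteq> 0 \<longrightarrow> v (x + y) \<ge> min (v x) (v y)) \<and>
     \<pi> \<noteq> 0 \<and> v \<pi> = 1 \<and>
     (\<exists>S. finite S \<and> (\<forall>s\<in>S. s = 0 \<or> v s \<ge> 0) \<and>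
        (\<forall>x. (x = 0 \<or> v x \<ge> 0) \<longrightarrow> (\<exists>s\<in>S. x - s = 0 \<or> v (x - s) \<ge> 1))) \<and>
     (\<forall>x :: nat \<Rightarrow> 'a.
        (\<forall>N::int. \<exists>M. \<forall>p\<ge>M. \<forall>q\<ge>M. x p = x q \<or> v (x p - x q) \<ge> N) \<longrightarrow>
        (\<exists>L. \<forall>N::int. \<exists>M. \<forall>p\<ge>M. x p = L \<or> v (x p - L) \<ge> N))"

text \<open>Indices 1..n of the paper are 0..n-1 here. The permutation matrix of sigma
  sends e_j to e_(sigma j).\<close>
definition perm_mat :: "nat \<Rightarrow> (nat \<Rightarrow> nat) \<Rightarrow> 'a::{zero,one} mat" where
  "perm_mat n \<sigma> = mat n n (\<lambda>(i,j). if i = \<sigma> j then 1 else 0)"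

definition weyl :: "nat \<Rightarrow> 'a::{zero,one} mat set" where
  "weyl n = {perm_mat n \<sigma> | \<sigma>. \<sigma> permutes {..<n}}"

definition w0 :: "nat \<Rightarrow> 'a::{zero,one} mat" where
  "w0 n = perm_mat n (\<lambda>i. if i < n then n - 1 - i else i)"

definition center_GL :: "nat \<Rightarrow> 'a::field mat set" where
  "center_GL n = {c \<cdot>\<^sub>m 1\<^sub>m n | c. c \<noteq> 0}"

text \<open>For w = perm_mat n sigma one has (w beta)(t) = beta(w^-1 t w), which sends
  alpha_(i,j) to alpha_(sigma i, sigma j); hence w^-1 alpha_(i,i+1) =
  alpha_(inv sigma i, inv sigma (i+1)), which lies in Phi^- iff
  inv sigma i > inv sigma (i+1).\<close>
definition d_exp :: "nat \<Rightarrow> (nat \<Rightarrow> nat) \<Rightarrow> nat \<Rightarrow> int" where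
  "d_exp n \<sigma> = (THE k. k (n - 1) = 0 \<and> (\<forall>i\<ge>n. k i = 0) \<and>
      (\<forall>i. i + 1 < n \<longrightarrow>
         k i - k (i + 1) = (if Hilbert_Choice.inv \<sigma> i < Hilbert_Choice.inv \<sigma> (i + 1) then 0 else -1)))"

definition varpi_pow :: "nat \<Rightarrow> 'a::field \<Rightarrow> (nat \<Rightarrow> int) \<Rightarrow> 'a mat" where
  "varpi_pow n \<pi> k = mat n n (\<lambda>(i,j). if i = j then \<pi> powi (k i) else 0)"

definition d_elt :: "nat \<Rightarrow> 'a::field \<Rightarrow> 'a mat \<Rightarrow> 'a mat" where
  "d_elt n \<pi> w = varpi_pow n \<pi> (d_exp n (THE \<sigma>. \<sigma> permutes {..<n} \<and> w = perm_mat n \<sigma>))"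

end

(* The exponent vector k of d_w is determined by the descents of w^-1: going
   from k_(i+1) to k_i it drops by one exactly where w^-1 has a descent at i.
   Since (w0 w)^-1 = w^-1 w0, the word w^-1 is read backwards, so the descents of
   (w0 w)^-1 at i are the ascents of w^-1 at n-2-i, i.e. the complement of the
   reversed descent set.  Summing up,
     k_(w0 w)(i) = k_w(n-1-i) + k_(w0)(i) - k_w(0),
   where the first summand is the exponent of w0 d_w w0 (conjugation by w0
   reverses the diagonal), the second that of d_(w0), and the constant gives the
   central factor varpi^(-k_w(0)). *)

theory Submission
  imports Defs
begin

definition is_d_exp :: "nat \<Rightarrow> (nat \<Rightarrow> nat) \<Rightarrow> (nat \<Rightarrow> int) \<Rightarrow> bool" where
  "is_d_exp n \<sigma> k \<longleftrightarrow> k (n - 1) = 0 \<and> (\<forall>i\<ge>n. k i = 0) \<and>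
      (\<forall>i. i + 1 < n \<longrightarrow>
         k i - k (i + 1) = (if Hilbert_Choice.inv \<sigma> i < Hilbert_Choice.inv \<sigma> (i + 1) then 0 else -1))"

lemma is_d_exp_unique:
  assumes k: "is_d_exp n \<sigma> k" and l: "is_d_exp n \<sigma> l"
  shows "k = l"
proof
  fix i
  show "k i = l i"
  proof (cases "i < n")
    case True
    then have "i \<le> n - 1" by simp
    then show ?thesis
    proof (induction rule: inc_induct)
      case base
      show ?case using k l by (simp add: is_d_exp_def)
    next
      case (step j)
      then have "j + 1 < n" by simp
      then have "k j - k (j + 1) = l j - l (j + 1)"
        using k l by (simp add: is_d_exp_def)
      with step.IH show ?case by simp
    qed
  qed (use k l in \<open>simp add: is_d_exp_def\<close>)
qed

lemma is_d_exp_exists: "\<exists>k. is_d_exp n \<sigma> k"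
proof -
  define step :: "nat \<Rightarrow> int" where
    "step j = (if Hilbert_Choice.inv \<sigma> j < Hilbert_Choice.inv \<sigma> (j + 1) then 0 else -1)" for j
  define k where "k i = (\<Sum>j = i..<n - 1. step j)" for i
  have "is_d_exp n \<sigma> k"
    unfolding is_d_exp_def
  proof (intro conjI allI impI)
    fix i assume "i + 1 < n"
    then have "k i = step i + k (i + 1)"
      by (simp add: k_def sum.atLeast_Suc_lessThan)
    then show "k i - k (i + 1) = (if Hilbert_Choice.inv \<sigma> i < Hilbert_Choice.inv \<sigma> (i + 1) then 0 else -1)"
      by (simp add: step_def)
  qed (simp_all add: k_def)
  then show ?thesis by blast
qed

lemma d_exp_eqI: "is_d_exp n \<sigma> k \<Longrightarrow> d_exp n \<sigma> = k"
  unfolding d_exp_def is_d_exp_def[symmetric] using is_d_exp_unique by blast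

lemma is_d_exp_d_exp: "is_d_exp n \<sigma> (d_exp n \<sigma>)"
  using is_d_exp_exists d_exp_eqI by metis

lemma d_exp_last: "d_exp n \<sigma> (n - 1) = 0"
  using is_d_exp_d_exp by (simp add: is_d_exp_def)

definition w0_perm :: "nat \<Rightarrow> nat \<Rightarrow> nat" where
  "w0_perm n i = (if i < n then n - 1 - i else i)"

lemma w0_perm_involution [simp]: "w0_perm n (w0_perm n i) = i"
  by (simp add: w0_perm_def)

lemma w0_perm_permutes: "w0_perm n permutes {..<n}"
  by (rule bij_imp_permutes[OF bij_betw_byWitness[where f'="w0_perm n"]]) (auto simp: w0_perm_def)

lemma inv_w0_perm [simp]: "Hilbert_Choice.inv (w0_perm n) = w0_perm n"
  by (rule inv_unique_comp) (simp_all add: fun_eq_iff)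

lemma w0_eq_perm_mat: "w0 n = perm_mat n (w0_perm n)"
  by (simp add: w0_def w0_perm_def[abs_def])

lemma d_exp_w0_perm_diff: "i + 1 < n \<Longrightarrow> d_exp n (w0_perm n) i - d_exp n (w0_perm n) (i + 1) = -1"
  using is_d_exp_d_exp[of n "w0_perm n"] by (simp add: is_d_exp_def w0_perm_def)

lemma d_exp_w0_perm_comp:
  assumes \<sigma>: "\<sigma> permutes {..<n}" and i: "i < n"
  shows "d_exp n (w0_perm n \<circ> \<sigma>) i
    = d_exp n \<sigma> (w0_perm n i) + d_exp n (w0_perm n) i - d_exp n \<sigma> 0"
proof -
  define k where "k i = (if i < n then d_exp n \<sigma> (w0_perm n i) + d_exp n (w0_perm n) i - d_exp n \<sigma> 0 else 0)"
    for i
  have inv_comp: "Hilbert_Choice.inv (w0_perm n \<circ> \<sigma>) = Hilbert_Choice.inv \<sigma> \<circ> w0_perm n"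
    using o_inv_distrib[OF permutes_bij[OF w0_perm_permutes] permutes_bij[OF \<sigma>]] by simp
  have "is_d_exp n (w0_perm n \<circ> \<sigma>) k"
    unfolding is_d_exp_def
  proof (intro conjI allI impI)
    show "k (n - 1) = 0"
      using d_exp_last[of n "w0_perm n"] by (simp add: k_def w0_perm_def)
  next
    fix i assume "i + 1 < n"
    define j where "j = n - 2 - i"
    have j: "j + 1 < n" "w0_perm n i = j + 1" "w0_perm n (i + 1) = j"
      using \<open>i + 1 < n\<close> by (auto simp: j_def w0_perm_def)
    have "Hilbert_Choice.inv \<sigma> j \<noteq> Hilbert_Choice.inv \<sigma> (j + 1)"
      using permutes_inj[OF permutes_inv[OF \<sigma>]] by (simp add: inj_eq)
    then have descent_flip: "Hilbert_Choice.inv (w0_perm n \<circ> \<sigma>) i < Hilbert_Choice.inv (w0_perm n \<circ> \<sigma>) (i + 1)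
        \<longleftrightarrow> \<not> Hilbert_Choice.inv \<sigma> j < Hilbert_Choice.inv \<sigma> (j + 1)"
      unfolding inv_comp comp_apply j(2,3) by linarith
    have "k i - k (i + 1) = - (d_exp n \<sigma> j - d_exp n \<sigma> (j + 1)) - 1"
      using d_exp_w0_perm_diff[OF \<open>i + 1 < n\<close>] \<open>i + 1 < n\<close> j(2,3) by (simp add: k_def)
    also have "\<dots> = - (if Hilbert_Choice.inv \<sigma> j < Hilbert_Choice.inv \<sigma> (j + 1) then 0 else -1) - 1"
      using is_d_exp_d_exp[of n \<sigma>] j(1) by (simp add: is_d_exp_def)
    finally show "k i - k (i + 1) = (if Hilbert_Choice.inv (w0_perm n \<circ> \<sigma>) i
        < Hilbert_Choice.inv (w0_perm n \<circ> \<sigma>) (i + 1) then 0 else -1)"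
      using descent_flip by simp
  qed (simp add: k_def)
  then have "d_exp n (w0_perm n \<circ> \<sigma>) = k"
    by (rule d_exp_eqI)
  with i show ?thesis
    by (simp add: k_def)
qed

lemma perm_mat_carrier [simp]: "perm_mat n \<sigma> \<in> carrier_mat n n"
  by (simp add: perm_mat_def)

lemma varpi_pow_carrier [simp]: "varpi_pow n \<pi> k \<in> carrier_mat n n"
  by (simp add: varpi_pow_def)

lemma perm_mat_mult:
  assumes \<sigma>: "\<sigma> permutes {..<n}" and A: "A \<in> carrier_mat n n"
  shows "perm_mat n \<sigma> * (A :: 'a::semiring_1 mat) = mat n n (\<lambda>(i, j). A $$ (Hilbert_Choice.inv \<sigma> i, j))"
proof (rule eq_matI)
  fix i j assume "i < dim_row (mat n n (\<lambda>(i, j). A $$ (Hilbert_Choice.inv \<sigma> i, j)))"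
    and "j < dim_col (mat n n (\<lambda>(i, j). A $$ (Hilbert_Choice.inv \<sigma> i, j)))"
  then have i: "i < n" and j: "j < n" by auto
  have "(perm_mat n \<sigma> * A) $$ (i, j) = (\<Sum>l<n. (if i = \<sigma> l then 1 else 0) * A $$ (l, j))"
    using i j A by (simp add: perm_mat_def scalar_prod_def atLeast0LessThan)
  also have "\<dots> = (\<Sum>l<n. if l = Hilbert_Choice.inv \<sigma> i then A $$ (l, j) else 0)"
  proof (intro sum.cong refl)
    fix l
    have "i = \<sigma> l \<longleftrightarrow> l = Hilbert_Choice.inv \<sigma> i"
      using permutes_inv_eq[OF \<sigma>] by metis
    then show "(if i = \<sigma> l then 1 else 0) * A $$ (l, j) = (if l = Hilbert_Choice.inv \<sigma> i then A $$ (l, j) else 0)"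
      by simp
  qed
  also have "\<dots> = A $$ (Hilbert_Choice.inv \<sigma> i, j)"
    using permutes_in_image[OF permutes_inv[OF \<sigma>]] i by simp
  finally show "(perm_mat n \<sigma> * A) $$ (i, j) = mat n n (\<lambda>(i, j). A $$ (Hilbert_Choice.inv \<sigma> i, j)) $$ (i, j)"
    using i j by simp
qed (use A in \<open>auto simp: perm_mat_def\<close>)

lemma mult_perm_mat:
  assumes \<sigma>: "\<sigma> permutes {..<n}" and A: "A \<in> carrier_mat n n"
  shows "(A :: 'a::semiring_1 mat) * perm_mat n \<sigma> = mat n n (\<lambda>(i, j). A $$ (i, \<sigma> j))"
proof (rule eq_matI)
  fix i j assume "i < dim_row (mat n n (\<lambda>(i, j). A $$ (i, \<sigma> j)))"
    and "j < dim_col (mat n n (\<lambda>(i, j). A $$ (i, \<sigma> j)))"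
  then have i: "i < n" and j: "j < n" by auto
  have "(A * perm_mat n \<sigma>) $$ (i, j) = (\<Sum>l<n. A $$ (i, l) * (if l = \<sigma> j then 1 else 0))"
    using i j A by (simp add: perm_mat_def scalar_prod_def atLeast0LessThan)
  also have "\<dots> = (\<Sum>l<n. if l = \<sigma> j then A $$ (i, l) else 0)"
    by (intro sum.cong) auto
  also have "\<dots> = A $$ (i, \<sigma> j)"
    using permutes_in_image[OF \<sigma>] j by simp
  finally show "(A * perm_mat n \<sigma>) $$ (i, j) = mat n n (\<lambda>(i, j). A $$ (i, \<sigma> j)) $$ (i, j)"
    using i j by simp
qed (use A in \<open>auto simp: perm_mat_def\<close>)

lemma mult_varpi_pow:
  assumes A: "A \<in> carrier_mat n n"
  shows "A * varpi_pow n \<pi> k = mat n n (\<lambda>(i, j). A $$ (i, j) * \<pi> powi k j)"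
proof (rule eq_matI)
  fix i j assume "i < dim_row (mat n n (\<lambda>(i, j). A $$ (i, j) * \<pi> powi k j))"
    and "j < dim_col (mat n n (\<lambda>(i, j). A $$ (i, j) * \<pi> powi k j))"
  then have i: "i < n" and j: "j < n" by auto
  have "(A * varpi_pow n \<pi> k) $$ (i, j) = (\<Sum>l<n. A $$ (i, l) * (if l = j then \<pi> powi k l else 0))"
    using i j A by (simp add: varpi_pow_def scalar_prod_def atLeast0LessThan)
  also have "\<dots> = (\<Sum>l<n. if l = j then A $$ (i, l) * \<pi> powi k j else 0)"
    by (intro sum.cong) auto
  finally show "(A * varpi_pow n \<pi> k) $$ (i, j) = mat n n (\<lambda>(i, j). A $$ (i, j) * \<pi> powi k j) $$ (i, j)"
    using i j by simp
qed (use A in \<open>auto simp: varpi_pow_def\<close>)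

lemma perm_mat_mult_perm_mat:
  assumes "\<sigma> permutes {..<n}"
  shows "perm_mat n \<rho> * perm_mat n \<sigma> = (perm_mat n (\<rho> \<circ> \<sigma>) :: 'a::semiring_1 mat)"
  unfolding mult_perm_mat[OF assms perm_mat_carrier]
  by (rule eq_matI) (use permutes_in_image[OF assms] in \<open>auto simp: perm_mat_def\<close>)

lemma perm_mat_conj_varpi_pow:
  assumes "\<sigma> permutes {..<n}"
  shows "perm_mat n \<sigma> * varpi_pow n \<pi> k * perm_mat n (Hilbert_Choice.inv \<sigma>)
    = varpi_pow n \<pi> (k \<circ> Hilbert_Choice.inv \<sigma>)"
proof -
  have inv: "Hilbert_Choice.inv \<sigma> permutes {..<n}"
    using permutes_inv[OF assms] .
  show ?thesis
    unfolding perm_mat_mult[OF assms varpi_pow_carrier] mult_perm_mat[OF inv mat_carrier]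
    by (rule eq_matI)
      (use permutes_in_image[OF inv] inj_eq[OF permutes_inj[OF inv]] in \<open>auto simp: varpi_pow_def\<close>)
qed

lemma varpi_pow_cong: "(\<And>i. i < n \<Longrightarrow> k i = l i) \<Longrightarrow> varpi_pow n \<pi> k = varpi_pow n \<pi> l"
  by (auto simp: varpi_pow_def)

lemma varpi_pow_add:
  assumes "\<pi> \<noteq> 0"
  shows "varpi_pow n \<pi> (\<lambda>i. k i + l i) = varpi_pow n \<pi> k * varpi_pow n \<pi> l"
  unfolding mult_varpi_pow[OF varpi_pow_carrier]
  by (rule eq_matI) (use assms in \<open>auto simp: varpi_pow_def power_int_add\<close>)

lemma varpi_pow_const_in_center_GL:
  assumes "\<pi> \<noteq> 0"
  shows "varpi_pow n \<pi> (\<lambda>_. c) \<in> center_GL n"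
proof -
  have "varpi_pow n \<pi> (\<lambda>_. c) = \<pi> powi c \<cdot>\<^sub>m 1\<^sub>m n"
    by (rule eq_matI) (auto simp: varpi_pow_def)
  then show ?thesis
    using assms by (auto simp: center_GL_def)
qed

lemma perm_mat_inj:
  assumes \<sigma>: "\<sigma> permutes {..<n}" and \<rho>: "\<rho> permutes {..<n}"
    and eq: "perm_mat n \<sigma> = (perm_mat n \<rho> :: 'a::zero_neq_one mat)"
  shows "\<sigma> = \<rho>"
proof
  fix j
  show "\<sigma> j = \<rho> j"
  proof (cases "j < n")
    case True
    then have "\<sigma> j < n"
      using permutes_in_image[OF \<sigma>] by simp
    with True have "(perm_mat n \<sigma> :: 'a mat) $$ (\<sigma> j, j) = 1"
      by (simp add: perm_mat_def)
    then have "(perm_mat n \<rho> :: 'a mat) $$ (\<sigma> j, j) = 1"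
      by (simp only: eq)
    with True \<open>\<sigma> j < n\<close> show ?thesis
      by (simp add: perm_mat_def split: if_split_asm)
  qed (simp add: permutes_not_in[OF \<sigma>] permutes_not_in[OF \<rho>])
qed

lemma d_elt_perm_mat:
  assumes "\<sigma> permutes {..<n}"
  shows "d_elt n \<pi> (perm_mat n \<sigma>) = varpi_pow n \<pi> (d_exp n \<sigma>)"
proof -
  have "(THE \<rho>. \<rho> permutes {..<n} \<and> perm_mat n \<sigma> = (perm_mat n \<rho> :: 'a mat)) = \<sigma>"
    using assms perm_mat_inj by (intro the_equality) auto
  then show ?thesis
    by (simp add: d_elt_def)
qed

lemma nonarch_local_field_unif_nonzero: "nonarch_local_field_unif v \<pi> \<Longrightarrow> \<pi> \<noteq> 0"
  by (simp add: nonarch_local_field_unif_def)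

theorem mainTheorem12:
  fixes v :: "'a::field \<Rightarrow> int" and \<pi> :: 'a and n :: nat
  assumes "nonarch_local_field_unif v \<pi>"
    and "n \<ge> 1"
  shows "\<forall>w \<in> weyl n. \<exists>z \<in> center_GL n.
           d_elt n \<pi> (w0 n * w) = w0 n * d_elt n \<pi> w * w0 n * d_elt n \<pi> (w0 n) * z"
proof
  fix w :: "'a mat" assume "w \<in> weyl n"
  then obtain \<sigma> where \<sigma>: "\<sigma> permutes {..<n}" and w: "w = perm_mat n \<sigma>"
    by (auto simp: weyl_def)
  have \<pi>: "\<pi> \<noteq> 0"
    using assms(1) by (rule nonarch_local_field_unif_nonzero)
  define a where "a = d_exp n \<sigma>"
  define c where "c = d_exp n (w0_perm n)"
  define z :: "'a mat" where "z = varpi_pow n \<pi> (\<lambda>_. - a 0)"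
  have "d_elt n \<pi> (w0 n * w) = varpi_pow n \<pi> (d_exp n (w0_perm n \<circ> \<sigma>))"
    by (simp add: w w0_eq_perm_mat perm_mat_mult_perm_mat \<sigma> d_elt_perm_mat permutes_compose w0_perm_permutes)
  also have "\<dots> = varpi_pow n \<pi> (\<lambda>i. (a (w0_perm n i) + c i) + - a 0)"
    by (rule varpi_pow_cong) (simp add: d_exp_w0_perm_comp \<sigma> a_def c_def)
  also have "\<dots> = varpi_pow n \<pi> (a \<circ> w0_perm n) * varpi_pow n \<pi> c * z"
    unfolding z_def by (simp only: varpi_pow_add[OF \<pi>, symmetric] comp_apply)
  also have "varpi_pow n \<pi> (a \<circ> w0_perm n) = w0 n * d_elt n \<pi> w * w0 n"
    using perm_mat_conj_varpi_pow[OF w0_perm_permutes, where \<pi> = \<pi> and k = a]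
    by (simp add: w w0_eq_perm_mat d_elt_perm_mat \<sigma> a_def)
  also have "varpi_pow n \<pi> c = d_elt n \<pi> (w0 n)"
    by (simp add: w0_eq_perm_mat d_elt_perm_mat w0_perm_permutes c_def)
  finally show "\<exists>z \<in> center_GL n.
      d_elt n \<pi> (w0 n * w) = w0 n * d_elt n \<pi> w * w0 n * d_elt n \<pi> (w0 n) * z"
    using varpi_pow_const_in_center_GL[OF \<pi>] z_def by blast
qed

end
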